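(* If $f \in R$ satisfies $v(f) > a_n$, then $f \in \mathfrak m^2$.
   Context: Let $k$ be a field and let $(R,\mathfrak m)$ be a complete local noetherian domain of dimension $1$ containing $k$ with $R/\mathfrak m = k$, with normalization $\overline R$ having residue field $k$, so $\overline R = k[[t]]$ and $R \subseteq k[[t]]$ is finite birational. Let $v$ be the $t$-adic valuation, $v(0)=\infty$. For $A \subseteq k((t))$ let $v(A) = \{v(f): f\in A\setminus\{0\}\}$. The Herzog–Kunz sequence of $R$ is $v(\mathfrak m)\setminus v(\mathfrak m^2)$ listed increasingly as $a_1 < \cdots < a_n$. *)

theory Defs
  imports "HOL-Computational_Algebra.Formal_Power_Series"
begin

text \<open>We work inside k[[t]] = 'a fps, 'a a field; subsets of k[[t]] model subrings.\<close>

definition is_subring :: "'a::field fps set \<Rightarrow> bool" where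
  "is_subring R \<longleftrightarrow> 0 \<in> R \<and> 1 \<in> R \<and>
     (\<forall>x\<in>R. \<forall>y\<in>R. x + y \<in> R \<and> x - y \<in> R \<and> x * y \<in> R)"

definition is_ideal_of :: "'a::field fps set \<Rightarrow> 'a fps set \<Rightarrow> bool" where
  "is_ideal_of I R \<longleftrightarrow> I \<subseteq> R \<and> 0 \<in> I \<and>
     (\<forall>x\<in>I. \<forall>y\<in>I. x + y \<in> I) \<and> (\<forall>r\<in>R. \<forall>x\<in>I. r * x \<in> I)"

definition ideal_prod :: "'a::field fps set \<Rightarrow> 'a fps set \<Rightarrow> 'a fps set" where
  "ideal_prod I J = {x. \<exists>(n::nat) a b. (\<forall>i<n. a i \<in> I \<and> b i \<in> J) \<and> x = (\<Sum>i<n. a i * b i)}"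

text \<open>Maximal ideal of the (local) ring R: the non-units of R.\<close>
definition max_ideal :: "'a::field fps set \<Rightarrow> 'a fps set" where
  "max_ideal R = {f \<in> R. \<not> (\<exists>g\<in>R. f * g = 1)}"

fun max_ideal_pow :: "'a::field fps set \<Rightarrow> nat \<Rightarrow> 'a fps set" where
  "max_ideal_pow R 0 = R"
| "max_ideal_pow R (Suc j) = ideal_prod (max_ideal R) (max_ideal_pow R j)"

definition is_local :: "'a::field fps set \<Rightarrow> bool" where
  "is_local R \<longleftrightarrow> is_ideal_of (max_ideal R) R \<and> max_ideal R \<noteq> R"

definition is_noetherian :: "'a::field fps set \<Rightarrow> bool" where
  "is_noetherian R \<longleftrightarrow> (\<forall>I. is_ideal_of I R \<longrightarrow>
     (\<exists>(n::nat) g. (\<forall>i<n. g i \<in> I) \<and>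
        (\<forall>x\<in>I. \<exists>r. (\<forall>i<n. r i \<in> R) \<and> x = (\<Sum>i<n. r i * g i))))"

definition is_complete_local :: "'a::field fps set \<Rightarrow> bool" where
  "is_complete_local R \<longleftrightarrow> (\<forall>x :: nat \<Rightarrow> 'a fps.
     (\<forall>i. x i \<in> R) \<and> (\<forall>j. \<exists>N. \<forall>p\<ge>N. \<forall>q\<ge>N. x p - x q \<in> max_ideal_pow R j) \<longrightarrow>
     (\<exists>y\<in>R. \<forall>j. \<exists>N. \<forall>p\<ge>N. x p - y \<in> max_ideal_pow R j))"

definition fps_finite_over :: "'a::field fps set \<Rightarrow> bool" where
  "fps_finite_over R \<longleftrightarrow> (\<exists>(n::nat) g. \<forall>h :: 'a fps. \<exists>r. (\<forall>i<n. r i \<in> R) \<and> h = (\<Sum>i<n. r i * g i))"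

text \<open>Birational: k[[t]] lies in the fraction field of R.\<close>
definition fps_birational_over :: "'a::field fps set \<Rightarrow> bool" where
  "fps_birational_over R \<longleftrightarrow> (\<forall>h :: 'a fps. \<exists>a\<in>R. \<exists>b\<in>R. b \<noteq> 0 \<and> h * b = a)"

text \<open>Value set v(A) with v the t-adic valuation (subdegree).\<close>
definition vals :: "'a::field fps set \<Rightarrow> nat set" where
  "vals A = {subdegree f | f. f \<in> A \<and> f \<noteq> 0}"

text \<open>Herzog--Kunz set v(m) minus v(m^2); its largest element is a_n.\<close>
definition HK_set :: "'a::field fps set \<Rightarrow> nat set" where
  "HK_set R = vals (max_ideal R) - vals (ideal_prod (max_ideal R) (max_ideal R))"

end

theory Submission
  imports Defs
begin

text \<open>
  Since k[[t]] is finite and birational over R, clearing the denominators of a finite generating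
  set gives a nonzero conductor element B \<in> R with B k[[t]] \<subseteq> R; hence R contains every series
  of order at least c = v(B). A series of order at least 2c + 2 is then the product of two
  series of positive order at least c, i.e. of two non-units of R, so it lies in m^2; in particular
  v(m) - v(m^2) is finite. If f \<in> R has v(f) > a_n, then v(f) \<in> v(m^2), so subtracting a scalar
  multiple of an element of m^2 of the same order raises the order of f. After finitely many
  such steps the order exceeds 2c + 1 and the remainder lies in m^2.
\<close>

unbundle fps_syntax

lemma ideal_prod_memI:
  "\<forall>i<n. A i \<in> I \<and> B i \<in> J \<Longrightarrow> x = (\<Sum>i<(n::nat). A i * B i) \<Longrightarrow>
    x \<in> ideal_prod I J"
  unfolding ideal_prod_def by blast

lemma ideal_prod_memE:
  assumes "x \<in> ideal_prod I J"
  obtains n :: nat and A B where "\<forall>i<n. A i \<in> I \<and> B i \<in> J" "x = (\<Sum>i<n. A i * B i)"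
  using assms unfolding ideal_prod_def by blast

lemma ideal_prod_zero: "0 \<in> ideal_prod I J"
  by (rule ideal_prod_memI[of 0]) simp_all

lemma ideal_prod_mult_mem: "a \<in> I \<Longrightarrow> b \<in> J \<Longrightarrow> a * b \<in> ideal_prod I J"
  by (rule ideal_prod_memI[of 1 "\<lambda>_. a" _ "\<lambda>_. b"]) simp_all

lemma ideal_prod_add_mult_mem:
  assumes "x \<in> ideal_prod I J" "a \<in> I" "b \<in> J"
  shows "x + a * b \<in> ideal_prod I J"
proof -
  from assms(1) obtain n :: nat and A B
    where AB: "\<forall>i<n. A i \<in> I \<and> B i \<in> J" "x = (\<Sum>i<n. A i * B i)"
    by (rule ideal_prod_memE)
  have "\<forall>i<Suc n. (A(n := a)) i \<in> I \<and> (B(n := b)) i \<in> J"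
    using AB assms by (auto simp: less_Suc_eq)
  moreover have "x + a * b = (\<Sum>i<Suc n. (A(n := a)) i * (B(n := b)) i)"
    using AB by simp
  ultimately show ?thesis
    by (rule ideal_prod_memI)
qed

lemma ideal_prod_add:
  assumes "x \<in> ideal_prod I J" "y \<in> ideal_prod I J"
  shows "x + y \<in> ideal_prod I J"
proof -
  from assms(2) obtain n :: nat and A B
    where AB: "\<forall>i<n. A i \<in> I \<and> B i \<in> J" "y = (\<Sum>i<n. A i * B i)"
    by (rule ideal_prod_memE)
  have "m \<le> n \<Longrightarrow> x + (\<Sum>i<m. A i * B i) \<in> ideal_prod I J" for m
  proof (induction m)
    case 0
    then show ?case using assms(1) by simp
  next
    case (Suc m)
    then have "x + (\<Sum>i<m. A i * B i) + A m * B m \<in> ideal_prod I J"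
      using AB by (intro ideal_prod_add_mult_mem) auto
    then show ?case by (simp add: add.assoc)
  qed
  then show ?thesis using AB by simp
qed

lemma ideal_prod_left_mult:
  assumes "\<forall>r\<in>R. \<forall>a\<in>I. r * a \<in> I" "r \<in> R" "x \<in> ideal_prod I J"
  shows "r * x \<in> ideal_prod I J"
proof -
  from assms(3) obtain n :: nat and A B
    where AB: "\<forall>i<n. A i \<in> I \<and> B i \<in> J" "x = (\<Sum>i<n. A i * B i)"
    by (rule ideal_prod_memE)
  then have "\<forall>i<n. r * A i \<in> I \<and> B i \<in> J" and "r * x = (\<Sum>i<n. (r * A i) * B i)"
    using assms(1,2) by (auto simp: sum_distrib_left mult.assoc)
  then show ?thesis
    by (rule ideal_prod_memI)
qed

lemma is_subring_mult_mem:
  "is_subring R \<Longrightarrow> x \<in> R \<Longrightarrow> y \<in> R \<Longrightarrow> x * y \<in> R"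
  by (simp add: is_subring_def)

lemma is_subring_sum_mem:
  "is_subring R \<Longrightarrow> \<forall>i<(n::nat). g i \<in> R \<Longrightarrow> (\<Sum>i<n. g i) \<in> R"
  by (induction n) (auto simp: is_subring_def)

lemma ideal_prod_subset:
  assumes "is_subring R" "I \<subseteq> R" "J \<subseteq> R"
  shows "ideal_prod I J \<subseteq> R"
proof
  fix x assume "x \<in> ideal_prod I J"
  then obtain n :: nat and A B
    where AB: "\<forall>i<n. A i \<in> I \<and> B i \<in> J" "x = (\<Sum>i<n. A i * B i)"
    by (rule ideal_prod_memE)
  then have "\<forall>i<n. A i * B i \<in> R"
    using assms unfolding is_subring_def by blast
  then show "x \<in> R"
    using AB is_subring_sum_mem[OF assms(1)] by simp
qed

lemma max_ideal_subset: "max_ideal R \<subseteq> R"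
  by (auto simp: max_ideal_def)

lemma max_ideal_memI:
  assumes "f \<in> R" "0 < subdegree f"
  shows "f \<in> max_ideal R"
proof -
  have "f $ 0 = 0" using assms(2) by blast
  then have "f * g \<noteq> 1" for g
    by (metis fps_mult_nth_0 fps_one_nth mult_zero_left zero_neq_one)
  then show ?thesis using assms(1) by (simp add: max_ideal_def)
qed

lemma subdegree_cancel_leading_term:
  fixes g h :: "'a::field fps"
  defines "h' \<equiv> h - fps_const (h $ subdegree h / g $ subdegree h) * g"
  assumes "g \<noteq> 0" "subdegree g = subdegree h" "h' \<noteq> 0"
  shows "subdegree h < subdegree h'"
proof -
  have "h' $ i = 0" if "i \<le> subdegree h" for i
  proof (cases "i = subdegree h")
    case True
    have "g $ subdegree g \<noteq> 0" using assms(2) by simp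
    then show ?thesis unfolding h'_def True assms(3)[symmetric] by simp
  next
    case False
    then have "h $ i = 0" "g $ i = 0" using that assms(3) by (auto intro: nth_less_subdegree_zero)
    then show ?thesis unfolding h'_def by simp
  qed
  then show ?thesis
    using subdegree_geI[OF assms(4), of "Suc (subdegree h)"] by simp
qed

lemma birational_common_denominator:
  fixes g :: "nat \<Rightarrow> 'a::field fps"
  assumes "is_subring R" "fps_birational_over R"
  shows "\<exists>B\<in>R. B \<noteq> 0 \<and> (\<forall>i<n. g i * B \<in> R)"
proof (induction n)
  case 0
  have "1 \<in> R" using assms(1) by (simp add: is_subring_def)
  then show ?case by (intro bexI[of _ 1]) auto
next
  case (Suc n)
  then obtain B where B: "B \<in> R" "B \<noteq> 0" "\<forall>i<n. g i * B \<in> R" by blast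
  obtain a b where ab: "a \<in> R" "b \<in> R" "b \<noteq> 0" "g n * b = a"
    using assms(2) unfolding fps_birational_over_def by blast
  have "\<forall>i<Suc n. g i * (B * b) \<in> R"
  proof (intro allI impI)
    fix i assume "i < Suc n"
    then consider "i < n" | "i = n" by linarith
    then show "g i * (B * b) \<in> R"
    proof cases
      case 1
      then have "g i * B * b \<in> R"
        using B(3) ab(2) is_subring_mult_mem[OF assms(1)] by blast
      then show ?thesis by (simp add: mult.assoc)
    next
      case 2
      have "B * (g n * b) \<in> R"
        using B(1) ab(1,4) is_subring_mult_mem[OF assms(1)] by simp
      then show ?thesis using 2 by (simp add: ac_simps)
    qed
  qed
  moreover have "B * b \<in> R" using B(1) ab(2) is_subring_mult_mem[OF assms(1)] by blast
  ultimately show ?case using B(2) ab(3) by (intro bexI[of _ "B * b"]) auto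
qed

lemma conductor_element_exists:
  assumes "is_subring R" "fps_finite_over R" "fps_birational_over R"
  shows "\<exists>B\<in>R. B \<noteq> 0 \<and> (\<forall>h. h * B \<in> R)"
proof -
  obtain n :: nat and g
    where gen: "\<forall>h :: 'a fps. \<exists>r. (\<forall>i<n. r i \<in> R) \<and> h = (\<Sum>i<n. r i * g i)"
    using assms(2) unfolding fps_finite_over_def by blast
  obtain B where B: "B \<in> R" "B \<noteq> 0" "\<forall>i<n. g i * B \<in> R"
    using birational_common_denominator[OF assms(1,3)] by blast
  have "h * B \<in> R" for h
  proof -
    obtain r where r: "\<forall>i<n. r i \<in> R" "h = (\<Sum>i<n. r i * g i)" using gen by blast
    then have "h * B = (\<Sum>i<n. r i * (g i * B))"
      by (simp add: sum_distrib_right mult.assoc)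
    moreover have "\<forall>i<n. r i * (g i * B) \<in> R"
      using r(1) B(3) is_subring_mult_mem[OF assms(1)] by blast
    ultimately show ?thesis using is_subring_sum_mem[OF assms(1)] by simp
  qed
  then show ?thesis using B(1,2) by blast
qed

lemma subring_contains_tail:
  assumes "is_subring R" "fps_finite_over R" "fps_birational_over R"
  shows "\<exists>c. \<forall>h. c \<le> subdegree h \<longrightarrow> h \<in> R"
proof -
  obtain B where B: "B \<in> R" "B \<noteq> 0" "\<forall>h. h * B \<in> R"
    using conductor_element_exists[OF assms] by blast
  have "h \<in> R" if "subdegree B \<le> subdegree h" for h
  proof (cases "h = 0")
    case True
    then show ?thesis using assms(1) by (simp add: is_subring_def)
  next
    case False
    then have "B dvd h" using fps_dvd_iff[OF B(2)] that by simp
    then obtain q where "h = B * q" ..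
    then show ?thesis using B(3)[rule_format, of q] by (simp add: mult.commute)
  qed
  then show ?thesis by blast
qed

lemma tail_in_max_ideal_sq:
  assumes tail: "\<forall>h. c \<le> subdegree h \<longrightarrow> h \<in> R" and "2 * Suc c \<le> subdegree h"
  shows "h \<in> ideal_prod (max_ideal R) (max_ideal R)"
proof -
  have "fps_X ^ Suc c \<in> max_ideal R"
    using tail by (intro max_ideal_memI) (auto simp: fps_X_power_subdegree)
  moreover have "fps_shift (Suc c) h \<in> max_ideal R"
    using tail assms(2) by (intro max_ideal_memI) auto
  moreover have "h = fps_shift (Suc c) h * fps_X ^ Suc c"
    using assms(2) by (intro fps_shift_times_fps_X_power[symmetric]) simp
  ultimately show ?thesis by (metis ideal_prod_mult_mem)
qed

lemma HK_set_bounded: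
  assumes "\<And>h. N \<le> subdegree h \<Longrightarrow> h \<in> ideal_prod (max_ideal R) (max_ideal R)"
  shows "HK_set R \<subseteq> {..<N}"
  using assms unfolding HK_set_def vals_def by (auto simp: not_less)

lemma subdegree_in_vals_max_ideal_sq:
  assumes "h \<in> R" "h \<noteq> 0" "finite (HK_set R)" "Max (HK_set R) < subdegree h"
  shows "subdegree h \<in> vals (ideal_prod (max_ideal R) (max_ideal R))"
proof -
  have "subdegree h \<notin> HK_set R"
    using assms(3,4) Max_ge leD by blast
  moreover have "h \<in> max_ideal R"
    using assms(1,4) by (intro max_ideal_memI) auto
  ultimately show ?thesis
    using assms(2) unfolding HK_set_def vals_def by blast
qed

lemma mem_max_ideal_sq_above_HK_set:
  assumes subring: "is_subring R" and constants: "\<And>c. fps_const c \<in> R"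
    and ideal: "\<forall>r\<in>R. \<forall>x\<in>max_ideal R. r * x \<in> max_ideal R"
    and tail: "\<And>h. N \<le> subdegree h \<Longrightarrow> h \<in> ideal_prod (max_ideal R) (max_ideal R)"
    and "h \<in> R" "h = 0 \<or> Max (HK_set R) < subdegree h"
  shows "h \<in> ideal_prod (max_ideal R) (max_ideal R)"
  using assms(5,6)
proof (induction "N - subdegree h" arbitrary: h rule: less_induct)
  case less
  let ?m2 = "ideal_prod (max_ideal R) (max_ideal R)"
  show ?case
  proof (cases "h = 0 \<or> N \<le> subdegree h")
    case True
    then show ?thesis using tail[of h] ideal_prod_zero by auto
  next
    case False
    then have h0: "h \<noteq> 0" and below_N: "subdegree h < N" by auto
    have above_HK: "Max (HK_set R) < subdegree h" using less.prems(2) h0 by simp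
    have "finite (HK_set R)"
      using HK_set_bounded[OF tail] finite_subset by blast
    then have "subdegree h \<in> vals ?m2"
      using subdegree_in_vals_max_ideal_sq[OF less.prems(1) h0] above_HK by blast
    then obtain g where g: "g \<in> ?m2" "g \<noteq> 0" "subdegree h = subdegree g"
      unfolding vals_def by blast
    define h' where "h' = h - fps_const (h $ subdegree h / g $ subdegree h) * g"
    have "g \<in> R"
      using g(1) ideal_prod_subset[OF subring max_ideal_subset max_ideal_subset] by blast
    then have h'_mem: "h' \<in> R"
      using less.prems(1) constants subring by (simp add: h'_def is_subring_def)
    have "h' \<in> ?m2"
    proof (cases "h' = 0")
      case True
      then show ?thesis using ideal_prod_zero by simp
    next
      case False
      then have higher: "subdegree h < subdegree h'"
        using subdegree_cancel_leading_term[OF g(2) g(3)[symmetric]] by (simp add: h'_def)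
      then have "N - subdegree h' < N - subdegree h"
        using below_N by linarith
      moreover have "Max (HK_set R) < subdegree h'"
        using higher above_HK by linarith
      ultimately show ?thesis
        using less.hyps[OF _ h'_mem] by blast
    qed
    moreover have "fps_const (h $ subdegree h / g $ subdegree h) * g \<in> ?m2"
      using ideal_prod_left_mult[OF ideal constants g(1)] .
    ultimately have "h' + fps_const (h $ subdegree h / g $ subdegree h) * g \<in> ?m2"
      by (rule ideal_prod_add)
    then show ?thesis by (simp add: h'_def)
  qed
qed

theorem mainTheorem6:
  fixes R :: "'a::field fps set" and f :: "'a fps"
  assumes subring: "is_subring R"
    and contains_k: "\<And>c. fps_const c \<in> R"
    and local: "is_local R"
    and residue: "\<forall>g\<in>R. \<exists>c. g - fps_const c \<in> max_ideal R"
    and noeth: "is_noetherian R"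
    and complete: "is_complete_local R"
    and finite_ext: "fps_finite_over R"
    and birational: "fps_birational_over R"
    and fR: "f \<in> R"
    and fval: "f = 0 \<or> subdegree f > Max (HK_set R)"
  shows "f \<in> ideal_prod (max_ideal R) (max_ideal R)"
proof -
  obtain c where "\<forall>h. c \<le> subdegree h \<longrightarrow> h \<in> R"
    using subring_contains_tail[OF subring finite_ext birational] by blast
  then have "\<And>h. 2 * Suc c \<le> subdegree h \<Longrightarrow> h \<in> ideal_prod (max_ideal R) (max_ideal R)"
    by (rule tail_in_max_ideal_sq)
  moreover have "\<forall>r\<in>R. \<forall>x\<in>max_ideal R. r * x \<in> max_ideal R"
    using local by (simp add: is_local_def is_ideal_of_def)
  ultimately show ?thesis
    using mem_max_ideal_sq_above_HK_set[OF subring contains_k] fR fval by blast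
qed

end
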